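(* For $m\ge1$ and $n\ge2$, \[ G_{m,n}=\frac{2(-1)^{n-1}}{n!}\int_0^1\binom{t}{m}\left[{n\atop 2}\right]_{t-1}dt . \]
   Context: The generalized Gregory coefficients $G_{m,n}$ are defined by $\sum_{m,n\ge0}G_{m,n}x^my^n=\dfrac{y\log^2(1+x)-x\log^2(1+y)}{\log(1+x)-\log(1+y)}$ (formal power series; $\log^ku=(\log u)^k$). $\binom{t}{m}=t(t-1)\cdots(t-m+1)/m!$. The Stirling polynomials of the first kind $\left[{n\atop m}\right]_x\in\mathbb Z[x]$ ($n\ge m\ge0$) are defined by $\sum_{m=0}^n\left[{n\atop m}\right]_x y^m=(x+y)(x+y+1)\cdots(x+y+n-1)$; equivalently $(1-t)^{-x}\frac{(-1)^m}{m!}\log^m(1-t)=\sum_{n\ge m}\left[{n\atop m}\right]_x\frac{t^n}{n!}$. *)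

theory Defs
  imports "HOL-Analysis.Analysis" "HOL-Computational_Algebra.Formal_Power_Series"
    "HOL-Computational_Algebra.Polynomial"
begin

text \<open>Bivariate formal power series over the reals are modelled as real fps fps:
  the outer variable is y, the inner (coefficient) variable is x.
  The coefficient of x^m y^n of F is fps_nth (fps_nth F n) m.\<close>

definition bvX :: "real fps fps" where "bvX = fps_const fps_X"
definition bvY :: "real fps fps" where "bvY = fps_X"

text \<open>log(1+x) and log(1+y) as bivariate series; fps_ln 1 = log(1+X).\<close>
definition logx :: "real fps fps" where "logx = fps_const (fps_ln 1)"
definition logy :: "real fps fps" where
  "logy = Abs_fps (\<lambda>n. fps_const (fps_nth (fps_ln (1::real)) n))"

definition gregory_gf :: "real fps fps" where
  "gregory_gf = (THE Q. Q * (logx - logy) = bvY * logx ^ 2 - bvX * logy ^ 2)"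

definition gen_gregory :: "nat \<Rightarrow> nat \<Rightarrow> real" where
  "gen_gregory m n = fps_nth (fps_nth gregory_gf n) m"

text \<open>Stirling polynomials of the first kind [n, m]_x, evaluated at real x:
  coefficient of y^m in (x+y)(x+y+1)...(x+y+n-1).\<close>
definition stirling1_poly :: "nat \<Rightarrow> nat \<Rightarrow> real \<Rightarrow> real" where
  "stirling1_poly n m x = coeff (\<Prod>i<n. [:x + of_nat i, 1:]) m"

end

theory Submission
  imports Defs
begin

text \<open>Treat t as a parameter and expand (1+x)^t and log(1+x) in x with coefficients that are
  polynomials in t. Put
  \<Phi>(x,y) = \<integral>_0^1 (1+x)^t (1+y)^(1-t) log^2(1+y) dt.
  Since \<partial>_t [(1+x)^t (1+y)^(1-t)] = (log(1+x) - log(1+y)) (1+x)^t (1+y)^(1-t),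
  integration gives \<Phi> (log(1+x) - log(1+y)) = log^2(1+y) (x - y), so the generating function
  is y (log(1+x) + log(1+y)) - \<Phi>. For m \<ge> 1 and n \<ge> 2 only \<Phi> contributes to the
  coefficient of x^m y^n; there the coefficient of x^m in (1+x)^t is binom(t,m), and the
  coefficient of y^n in (1+y)^(1-t) log^2(1+y) is 2(-1)^n/n! [n,2]_(t-1) by the generating
  function of the Stirling polynomials, which is verified through the linear differential
  equation both sides satisfy.\<close>

unbundle no vec_syntax
unbundle fps_syntax

section \<open>Coefficientwise maps and a linear differential equation\<close>

definition fps_map :: "('a \<Rightarrow> 'b) \<Rightarrow> 'a fps \<Rightarrow> 'b fps" where
  "fps_map f F = Abs_fps (\<lambda>n. f (F $ n))"

lemma fps_map_nth [simp]: "fps_map f F $ n = f (F $ n)"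
  by (simp add: fps_map_def)

lemma fps_map_comp: "fps_map f (fps_map g F) = fps_map (\<lambda>x. f (g x)) F"
  by (rule fps_ext) simp

lemma fps_map_ident: "fps_map (\<lambda>x. x) F = F"
  by (rule fps_ext) simp

lemma fps_map_add:
  assumes "\<And>x y. f (x + y) = f x + f y"
  shows "fps_map f (F + G) = fps_map f F + fps_map f G"
  by (rule fps_ext) (simp add: assms)

lemma fps_map_const:
  fixes f :: "'a::ab_group_add \<Rightarrow> 'b::ab_group_add"
  assumes "\<And>x y. f (x + y) = f x + f y"
  shows "fps_map f (fps_const c) = fps_const (f c)"
proof -
  interpret Modules.additive f by unfold_locales (rule assms)
  show ?thesis by (rule fps_ext) (simp add: zero)
qed

lemma fps_map_mult:
  fixes f :: "'a::ring \<Rightarrow> 'b::ring"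
  assumes add: "\<And>x y. f (x + y) = f x + f y" and mult: "\<And>x y. f (x * y) = f x * f y"
  shows "fps_map f (F * G) = fps_map f F * fps_map f G"
proof -
  interpret Modules.additive f by unfold_locales (rule add)
  show ?thesis by (rule fps_ext) (simp add: fps_mult_nth sum mult)
qed

lemma fps_map_deriv:
  fixes f :: "'a::ring_1 \<Rightarrow> 'b::ring_1"
  assumes add: "\<And>x y. f (x + y) = f x + f y"
  shows "fps_map f (fps_deriv F) = fps_deriv (fps_map f F)"
proof -
  interpret Modules.additive f by unfold_locales (rule add)
  have "f (of_nat n * x) = of_nat n * f x" for n x
    using sum[of "\<lambda>_. x" "{..<n}"] by simp
  then show ?thesis by (intro fps_ext) (simp del: of_nat_Suc)
qed

lemma fps_map_1: "f 0 = 0 \<Longrightarrow> f 1 = 1 \<Longrightarrow> fps_map f 1 = 1"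
  by (rule fps_ext) simp

lemma fps_map_X: "f 0 = 0 \<Longrightarrow> f 1 = 1 \<Longrightarrow> fps_map f fps_X = fps_X"
  by (rule fps_ext) (simp add: fps_X_nth)

lemma fps_one_plus_X_mult_deriv_nth:
  fixes F :: "'a::comm_ring_1 fps"
  shows "((1 + fps_X) * fps_deriv F) $ n = of_nat (Suc n) * F $ Suc n + of_nat n * F $ n"
proof -
  have "(1 + fps_X) * fps_deriv F = fps_deriv F + fps_X * fps_deriv F"
    by (simp add: algebra_simps)
  then show ?thesis by (cases n) (simp_all del: of_nat_Suc)
qed

lemma fps_linear_ode_unique:
  fixes F G :: "'a::{idom,ring_char_0} fps"
  assumes ode: "(1 + fps_X) * fps_deriv F + fps_const c * F
              = (1 + fps_X) * fps_deriv G + fps_const c * G"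
    and init: "F $ 0 = G $ 0"
  shows "F = G"
proof -
  define E where "E = F - G"
  have hom: "(1 + fps_X) * fps_deriv E + fps_const c * E = 0"
    using ode by (simp add: E_def algebra_simps)
  have "E $ n = 0" for n
  proof (induction n)
    case 0
    show ?case using init by (simp add: E_def)
  next
    case (Suc n)
    have "((1 + fps_X) * fps_deriv E + fps_const c * E) $ n = 0"
      using hom by simp
    with Suc.IH have "of_nat (Suc n) * E $ Suc n = 0"
      by (simp add: fps_one_plus_X_mult_deriv_nth del: of_nat_Suc)
    then show ?case by (simp del: of_nat_Suc)
  qed
  then show ?thesis by (simp add: E_def fps_eq_iff)
qed

section \<open>Power series with polynomial coefficients\<close>

abbreviation fps_pderiv :: "'a::idom poly fps \<Rightarrow> 'a poly fps" where
  "fps_pderiv \<equiv> fps_map pderiv"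

lemma fps_pderiv_mult: "fps_pderiv (F * G) = fps_pderiv F * G + F * fps_pderiv G"
proof (rule fps_ext)
  interpret pderiv: Modules.additive pderiv by unfold_locales (rule pderiv_add)
  fix n
  have "pderiv (\<Sum>i=0..n. F $ i * G $ (n - i))
      = (\<Sum>i=0..n. pderiv (F $ i) * G $ (n - i) + F $ i * pderiv (G $ (n - i)))"
    by (simp add: pderiv.sum pderiv_mult algebra_simps)
  then show "fps_pderiv (F * G) $ n = (fps_pderiv F * G + F * fps_pderiv G) $ n"
    by (simp add: fps_mult_nth sum.distrib)
qed

lemma fps_pderiv_fps_const: "fps_pderiv (fps_const p) = fps_const (pderiv p)"
  by (rule fps_map_const) (rule pderiv_add)

lemma fps_pderiv_deriv: "fps_pderiv (fps_deriv F) = fps_deriv (fps_pderiv F)"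
  by (rule fps_map_deriv) (rule pderiv_add)

definition log_series :: "'a::field_char_0 poly fps" where
  "log_series = fps_map (\<lambda>c. [:c:]) (fps_ln 1)"

lemma log_series_nth_0 [simp]: "log_series $ 0 = 0"
  by (simp add: log_series_def)

lemma fps_pderiv_log_series [simp]: "fps_pderiv log_series = 0"
  by (rule fps_ext) (simp add: log_series_def pderiv_pCons)

lemma log_series_ode: "(1 + fps_X) * fps_deriv log_series = 1"
proof -
  have "(1 + fps_X) * fps_deriv (fps_ln (1::'a)) = 1"
    by (simp add: fps_ln_deriv inverse_mult_eq_1')
  then have "fps_map (\<lambda>c. [:c:]) ((1 + fps_X) * fps_deriv (fps_ln (1::'a))) = 1"
    by (simp add: fps_map_1)
  then show ?thesis
    by (simp add: log_series_def fps_map_mult fps_map_add fps_map_1 fps_map_X fps_map_deriv)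
qed

text \<open>The series (1 + X)^T for a polynomial T in the parameter t.\<close>

definition binomial_series :: "'a::field_char_0 poly \<Rightarrow> 'a poly fps" where
  "binomial_series T = Abs_fps (\<lambda>m. smult (1 / fact m) (\<Prod>k<m. T - of_nat k))"

lemma binomial_series_nth_0 [simp]: "binomial_series T $ 0 = 1"
  by (simp add: binomial_series_def)

lemma binomial_series_nth_Suc:
  "of_nat (Suc m) * binomial_series T $ Suc m = (T - of_nat m) * binomial_series T $ m"
proof -
  have "of_nat (Suc m) / fact (Suc m) = (1 / fact m :: 'a)"
    by (simp add: fact_Suc field_simps del: of_nat_Suc)
  then show ?thesis
    by (simp add: binomial_series_def of_nat_poly mult_ac del: of_nat_Suc)
qed

lemma binomial_series_ode:
  "(1 + fps_X) * fps_deriv (binomial_series T) = fps_const T * binomial_series T"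
proof (rule fps_ext)
  fix m
  show "((1 + fps_X) * fps_deriv (binomial_series T)) $ m = (fps_const T * binomial_series T) $ m"
    unfolding fps_one_plus_X_mult_deriv_nth binomial_series_nth_Suc by (simp add: algebra_simps)
qed

lemma fps_eval_binomial_series:
  "fps_map (\<lambda>p. poly p t) (binomial_series T) = fps_binomial (poly T t)"
  by (rule fps_ext)
     (simp add: binomial_series_def gbinomial_prod_rev poly_prod atLeast0LessThan field_simps)

lemma poly_binomial_series_nth: "poly (binomial_series T $ m) t = poly T t gchoose m"
  using fps_eval_binomial_series[of t T] by (metis fps_binomial_nth fps_map_nth)

lemma fps_pderiv_1_plus_X [simp]: "fps_pderiv (1 + fps_X :: 'a::idom poly fps) = 0"
  by (rule fps_ext) (simp add: fps_X_nth)

lemma fps_pderiv_binomial_series: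
  "fps_pderiv (binomial_series T) = fps_const (pderiv T) * log_series * binomial_series T"
proof -
  define P where "P = binomial_series T"
  define c where "c = fps_const (pderiv T)"
  define E where "E = fps_pderiv P - c * log_series * P"
  have "(1 + fps_X) * fps_deriv (fps_pderiv P) = fps_pderiv ((1 + fps_X) * fps_deriv P)"
    by (simp add: fps_pderiv_mult fps_pderiv_deriv)
  also have "\<dots> = c * P + fps_const T * fps_pderiv P"
    by (simp add: P_def binomial_series_ode fps_pderiv_mult fps_pderiv_fps_const c_def)
  finally have deriv_pderiv:
    "(1 + fps_X) * fps_deriv (fps_pderiv P) = c * P + fps_const T * fps_pderiv P" .
  have "(1 + fps_X) * fps_deriv (c * log_series * P)
      = c * (((1 + fps_X) * fps_deriv log_series) * P + log_series * ((1 + fps_X) * fps_deriv P))"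
    by (simp add: c_def algebra_simps)
  also have "\<dots> = c * P + fps_const T * (c * log_series * P)"
    unfolding log_series_ode binomial_series_ode[of T, folded P_def] by (simp add: algebra_simps)
  finally have "(1 + fps_X) * fps_deriv E = fps_const T * E"
    using deriv_pderiv by (simp add: E_def algebra_simps)
  then have "(1 + fps_X) * fps_deriv E + fps_const (- T) * E
      = (1 + fps_X) * fps_deriv 0 + fps_const (- T) * 0"
    by (simp flip: fps_const_neg)
  then have "E = 0"
    by (rule fps_linear_ode_unique) (simp add: E_def P_def c_def)
  then show ?thesis by (simp add: E_def P_def c_def)
qed

section \<open>Stirling polynomials\<close>

fun stirling1_shifted :: "nat \<Rightarrow> nat \<Rightarrow> 'a::comm_ring_1 poly" where
  "stirling1_shifted 0 k = (if k = 0 then 1 else 0)"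
| "stirling1_shifted (Suc n) k = [:of_nat n - 1, 1:] * stirling1_shifted n k
     + (if k = 0 then 0 else stirling1_shifted n (k - 1))"

lemma stirling1_poly_Suc:
  "stirling1_poly (Suc n) k x = (x + of_nat n) * stirling1_poly n k x
     + (if k = 0 then 0 else stirling1_poly n (k - 1) x)"
proof -
  have "p * [:a, 1:] = smult a p + pCons 0 p" for p :: "real poly" and a
    by (simp add: mult_pCons_right)
  then show ?thesis
    by (cases k) (simp_all add: stirling1_poly_def coeff_pCons)
qed

lemma poly_stirling1_shifted: "poly (stirling1_shifted n k) t = stirling1_poly n k (t - 1)"
proof (induction n arbitrary: k)
  case 0
  show ?case by (simp add: stirling1_poly_def)
next
  case (Suc n)
  then show ?case by (simp add: stirling1_poly_Suc algebra_simps)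
qed

definition stirling_series :: "nat \<Rightarrow> 'a::field_char_0 poly fps" where
  "stirling_series k = Abs_fps (\<lambda>n. smult ((-1) ^ n / fact n) (stirling1_shifted n k))"

lemma stirling_series_ode:
  "(1 + fps_X) * fps_deriv (stirling_series k) + fps_const [:-1, 1:] * stirling_series k
     = (if k = 0 then 0 else - stirling_series (k - 1))" (is "?L = ?R")
proof (rule fps_ext)
  fix n
  define a :: 'a where "a = (-1) ^ n / fact n"
  define s :: "'a poly" where "s = stirling1_shifted n k"
  define r where "r = (if k = 0 then 0 else stirling1_shifted n (k - 1) :: 'a poly)"
  have "of_nat (Suc n) * ((-1) ^ Suc n / fact (Suc n)) = - a"
    by (simp add: a_def fact_Suc field_simps del: of_nat_Suc)
  then have "of_nat (Suc n) * stirling_series k $ Suc n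
      = smult (- a) (stirling1_shifted (Suc n) k)"
    by (simp add: stirling_series_def of_nat_poly del: of_nat_Suc stirling1_shifted.simps)
  then have deriv: "((1 + fps_X) * fps_deriv (stirling_series k)) $ n
      = smult a (of_nat n * s - stirling1_shifted (Suc n) k)"
    by (simp add: fps_one_plus_X_mult_deriv_nth stirling_series_def a_def s_def of_nat_poly
        smult_diff_right del: of_nat_Suc stirling1_shifted.simps)
  have lin: "(fps_const [:-1, 1:] * stirling_series k) $ n = smult a ([:-1, 1:] * s)"
    by (simp add: stirling_series_def a_def s_def del: stirling1_shifted.simps)
  have rhs: "(if k = 0 then 0 else - stirling_series (k - 1)) $ n = - smult a r"
    by (simp add: stirling_series_def a_def r_def del: stirling1_shifted.simps)
  have "of_nat n * s - stirling1_shifted (Suc n) k + [:-1, 1:] * s = - r"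
    by (simp add: s_def r_def of_nat_poly algebra_simps smult_diff_left
        del: stirling1_shifted.simps(1))
  then show "?L $ n = ?R $ n"
    unfolding fps_add_nth deriv lin rhs by (simp flip: smult_add_right smult_minus_right)
qed

text \<open>The generating function of the Stirling polynomials at u = -X and x = t - 1.\<close>

lemma stirling_series_eq:
  "stirling_series k = fps_const [:(-1) ^ k / fact k:] * log_series ^ k * binomial_series [:1, -1:]"
proof -
  define B :: "'a poly fps" where "B = binomial_series [:1, -1:]"
  define c :: "'a poly" where "c = [:-1, 1:]"
  have B_ode: "(1 + fps_X) * fps_deriv B + fps_const c * B = 0"
    by (simp add: B_def c_def binomial_series_ode flip: distrib_right)
  show ?thesis
  proof (induction k)
    case 0
    have "stirling_series 0 = B"
    proof (rule fps_linear_ode_unique[where c = c])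
      show "(1 + fps_X) * fps_deriv (stirling_series 0) + fps_const c * stirling_series 0
          = (1 + fps_X) * fps_deriv B + fps_const c * B"
        using stirling_series_ode[of 0] B_ode by (simp add: c_def)
    qed (simp add: stirling_series_def B_def)
    then show ?case by (simp add: B_def flip: one_pCons)
  next
    case (Suc k)
    define a :: "'a poly" where "a = [:(-1) ^ Suc k / fact (Suc k):]"
    define b :: "'a poly" where "b = [:(-1) ^ k / fact k:]"
    define F where "F = fps_const a * log_series ^ Suc k * B"
    have "a * of_nat (Suc k) = - b"
      by (simp add: a_def b_def of_nat_poly fact_Suc field_simps del: of_nat_Suc)
    then have ab: "fps_const a * of_nat (Suc k) = - fps_const b"
      by (simp del: of_nat_Suc flip: fps_of_nat)
    have "(1 + fps_X) * fps_deriv F + fps_const c * F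
        = fps_const a * of_nat (Suc k) * ((1 + fps_X) * fps_deriv log_series) * log_series ^ k * B
          + fps_const a * log_series ^ Suc k * ((1 + fps_X) * fps_deriv B + fps_const c * B)"
      by (simp add: F_def fps_deriv_power' algebra_simps del: power_Suc)
    also have "\<dots> = - (fps_const b * log_series ^ k * B)"
      unfolding log_series_ode B_ode ab
      by (simp only: mult_1_right mult_zero_right add_0_right mult_minus_left)
    finally have F_ode: "(1 + fps_X) * fps_deriv F + fps_const c * F = - stirling_series k"
      by (simp add: Suc.IH b_def B_def)
    have "stirling_series (Suc k) = F"
    proof (rule fps_linear_ode_unique[where c = c])
      show "(1 + fps_X) * fps_deriv (stirling_series (Suc k))
            + fps_const c * stirling_series (Suc k)
          = (1 + fps_X) * fps_deriv F + fps_const c * F"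
        using stirling_series_ode[of "Suc k"] F_ode by (simp add: c_def)
    qed (simp add: stirling_series_def F_def)
    then show ?case by (simp add: F_def a_def B_def)
  qed
qed

section \<open>Integration over the parameter\<close>

definition integral01 :: "real poly \<Rightarrow> real" where
  "integral01 p = integral {0..1} (poly p)"

lemma integral01_pderiv: "integral01 (pderiv p) = poly p 1 - poly p 0"
proof -
  have "(poly (pderiv p) has_integral poly p 1 - poly p 0) {0..1}"
    by (intro fundamental_theorem_of_calculus)
       (auto simp flip: has_real_derivative_iff_has_vector_derivative
             intro: DERIV_subset[OF poly_DERIV])
  then show ?thesis by (simp add: integral01_def integral_unique)
qed

lemma integral01_add: "integral01 (p + q) = integral01 p + integral01 q"
  unfolding integral01_def poly_add
  by (intro integral_add integrable_continuous_interval continuous_intros)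

lemma integral01_sum: "integral01 (\<Sum>i\<in>A. f i) = (\<Sum>i\<in>A. integral01 (f i))"
proof -
  interpret Modules.additive integral01 by unfold_locales (rule integral01_add)
  show ?thesis by (rule sum)
qed

lemma integral01_uminus: "integral01 (- p) = - integral01 p"
  unfolding integral01_def poly_minus by simp

lemma integral01_smult: "integral01 (smult c p) = c * integral01 p"
  unfolding integral01_def poly_smult by simp

text \<open>\<integral>_0^1 (1+x)^t F(t,y) dt, with x the inner and y the outer variable.\<close>

definition binomial_integral :: "real poly fps \<Rightarrow> real fps fps" where
  "binomial_integral F
     = Abs_fps (\<lambda>n. Abs_fps (\<lambda>m. integral01 (binomial_series [:0, 1:] $ m * F $ n)))"

lemma binomial_integral_nth [simp]:
  "binomial_integral F $ n $ m = integral01 (binomial_series [:0, 1:] $ m * F $ n)"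
  by (simp add: binomial_integral_def)

lemma binomial_integral_uminus: "binomial_integral (- F) = - binomial_integral F"
  by (intro fps_ext) (simp add: integral01_uminus)

lemma binomial_integral_mult_const_coeffs:
  "binomial_integral (F * fps_map (\<lambda>c. [:c:]) g) = binomial_integral F * fps_map fps_const g"
proof (intro fps_ext)
  fix n m
  have "binomial_series [:0, 1:] $ m * (F * fps_map (\<lambda>c. [:c:]) g) $ n
      = (\<Sum>j=0..n. smult (g $ (n - j)) (binomial_series [:0, 1:] $ m * F $ j))"
    by (simp add: fps_mult_nth sum_distrib_left mult_ac)
  moreover have "(binomial_integral F * fps_map fps_const g) $ n
      = (\<Sum>j=0..n. binomial_integral F $ j * fps_const (g $ (n - j)))"
    by (simp add: fps_mult_nth)
  ultimately show "binomial_integral (F * fps_map (\<lambda>c. [:c:]) g) $ n $ m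
      = (binomial_integral F * fps_map fps_const g) $ n $ m"
    by (simp add: fps_sum_nth integral01_sum integral01_smult mult.commute)
qed

lemma one_plus_bvX: "1 + bvX = fps_const (1 + fps_X)"
  by (rule fps_ext) (simp add: bvX_def)

lemma pderiv_binomial_series_X_nth:
  fixes m :: nat
  shows "pderiv (binomial_series [:0, 1:] $ m :: 'a::field_char_0 poly)
     = (\<Sum>i=0..m. smult (fps_ln 1 $ (m - i)) (binomial_series [:0, 1:] $ i))"
proof -
  have "fps_pderiv (binomial_series [:0, 1:])
      = binomial_series [:0, 1:] * (log_series :: 'a poly fps)"
    using fps_pderiv_binomial_series[of "[:0, 1:]"]
    by (simp add: mult.commute pderiv_pCons flip: one_pCons)
  from arg_cong[OF this, of "\<lambda>G. G $ m"]
  have "pderiv (binomial_series [:0, 1:] $ m)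
      = (binomial_series [:0, 1:] * log_series :: 'a poly fps) $ m"
    by simp
  then show ?thesis
    by (simp add: fps_mult_nth log_series_def mult.commute)
qed

lemma binomial_integral_mult_logx_nth:
  "(binomial_integral F * logx) $ n $ m
     = integral01 (pderiv (binomial_series [:0, 1:] $ m) * F $ n)"
proof -
  have "(binomial_integral F * logx) $ n = binomial_integral F $ n * fps_ln 1"
    by (simp add: logx_def)
  then have "(binomial_integral F * logx) $ n $ m
      = (\<Sum>i=0..m. integral01 (binomial_series [:0, 1:] $ i * F $ n) * fps_ln 1 $ (m - i))"
    by (simp only:) (simp add: fps_mult_nth)
  then show ?thesis
    by (simp add: pderiv_binomial_series_X_nth sum_distrib_left integral01_sum integral01_smult
        mult.commute[of _ "F $ n"] mult.commute[of _ "fps_ln 1 $ _"])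
qed

text \<open>Multiplication by log(1+x) differentiates (1+x)^t in t, so this is integration by
  parts.\<close>

lemma binomial_integral_by_parts:
  "binomial_integral F * logx + binomial_integral (fps_pderiv F)
     = (1 + bvX) * fps_map (\<lambda>p. fps_const (poly p 1)) F - fps_map (\<lambda>p. fps_const (poly p 0)) F"
    (is "?L = ?R")
proof (intro fps_ext)
  fix n m
  define B :: "real poly fps" where "B = binomial_series [:0, 1:]"
  have "?L $ n $ m = integral01 (pderiv (B $ m * F $ n))"
    by (simp add: B_def binomial_integral_mult_logx_nth pderiv_mult integral01_add add.commute
        mult.commute[of "F $ n"])
  also have "\<dots> = poly (B $ m) 1 * poly (F $ n) 1 - poly (B $ m) 0 * poly (F $ n) 0"
    by (simp add: integral01_pderiv)
  also have "\<dots> = (1 + fps_X) $ m * poly (F $ n) 1 - (1 :: real fps) $ m * poly (F $ n) 0"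
    by (simp add: B_def poly_binomial_series_nth gbinomial_0_left flip: fps_binomial_1)
  also have "\<dots> = ?R $ n $ m"
    unfolding one_plus_bvX by simp
  finally show "?L $ n $ m = ?R $ n $ m" .
qed

text \<open>The series (1+y)^(1-t) log^2(1+y), with y as the series variable.\<close>

definition gregory_kernel :: "'a::field_char_0 poly fps" where
  "gregory_kernel = log_series ^ 2 * binomial_series [:1, -1:]"

lemma logy_eq: "logy = fps_map fps_const (fps_ln 1)"
  by (simp add: logy_def fps_map_def)

lemma fps_pderiv_gregory_kernel:
  "fps_pderiv gregory_kernel = - (gregory_kernel * log_series)"
proof -
  have log_sq: "fps_pderiv (log_series ^ 2 :: 'a::field_char_0 poly fps) = 0"
    by (simp add: power2_eq_square fps_pderiv_mult)
  have "pderiv [:1, -1:] = (-1 :: 'a poly)"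
    by (simp add: pderiv_pCons one_pCons)
  then have minus_one: "fps_const (pderiv [:1, -1:]) = (-1 :: 'a poly fps)"
    by (metis fps_const_1_eq_1 fps_const_neg)
  show ?thesis
    unfolding gregory_kernel_def fps_pderiv_mult fps_pderiv_binomial_series log_sq minus_one
    by (simp add: algebra_simps)
qed

lemma fps_eval_gregory_kernel:
  "fps_map (\<lambda>p. poly p t) gregory_kernel = fps_ln 1 ^ 2 * fps_binomial (1 - t)"
  by (simp add: gregory_kernel_def fps_map_mult power2_eq_square log_series_def
      fps_eval_binomial_series fps_map_comp fps_map_ident)

lemma lift_eval_gregory_kernel:
  "fps_map (\<lambda>p. fps_const (poly p t)) gregory_kernel
     = logy ^ 2 * fps_map fps_const (fps_binomial (1 - t))"
proof -
  have "fps_map (\<lambda>p. fps_const (poly p t)) gregory_kernel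
      = fps_map fps_const (fps_map (\<lambda>p. poly p t) gregory_kernel)"
    by (simp add: fps_map_comp)
  also have "\<dots> = fps_map fps_const (fps_ln 1 ^ 2 * fps_binomial (1 - t))"
    by (simp only: fps_eval_gregory_kernel)
  finally show ?thesis
    by (simp add: fps_map_mult power2_eq_square logy_eq)
qed

lemma binomial_integral_gregory_kernel:
  "binomial_integral gregory_kernel * (logx - logy) = logy ^ 2 * (bvX - bvY)"
proof -
  define \<Phi> where "\<Phi> = binomial_integral gregory_kernel"
  have "binomial_integral (fps_pderiv gregory_kernel) = - (\<Phi> * logy)"
    by (simp add: fps_pderiv_gregory_kernel binomial_integral_uminus \<Phi>_def logy_eq
        binomial_integral_mult_const_coeffs[of _ "fps_ln 1", folded log_series_def])
  moreover have "fps_map fps_const (1 + fps_X :: real fps) = 1 + bvY"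
    by (simp add: fps_map_add fps_map_1 fps_map_X bvY_def)
  ultimately have "\<Phi> * logx - \<Phi> * logy = (1 + bvX) * logy ^ 2 - (1 + bvY) * logy ^ 2"
    using binomial_integral_by_parts[of gregory_kernel]
    by (simp add: \<Phi>_def lift_eval_gregory_kernel fps_binomial_1 fps_map_1 mult.commute)
  then show ?thesis
    by (simp add: \<Phi>_def algebra_simps)
qed

lemma logx_minus_logy_nonzero: "logx - logy \<noteq> 0"
proof
  assume "logx - logy = 0"
  then have "(logx - logy) $ 0 $ 1 = 0" by simp
  then show False by (simp add: logx_def logy_def fps_ln_nth)
qed

lemma gregory_gf_eq:
  "gregory_gf = bvY * (logx + logy) - binomial_integral gregory_kernel"
  unfolding gregory_gf_def
proof (rule the_equality)
  let ?\<Phi> = "binomial_integral gregory_kernel"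
  have "(bvY * (logx + logy) - ?\<Phi>) * (logx - logy)
      = bvY * (logx + logy) * (logx - logy) - logy ^ 2 * (bvX - bvY)"
    by (simp add: left_diff_distrib binomial_integral_gregory_kernel)
  also have "\<dots> = bvY * logx ^ 2 - bvX * logy ^ 2"
    by (simp add: algebra_simps power2_eq_square)
  finally show eq:
    "(bvY * (logx + logy) - ?\<Phi>) * (logx - logy) = bvY * logx ^ 2 - bvX * logy ^ 2" .
  fix Q
  assume "Q * (logx - logy) = bvY * logx ^ 2 - bvX * logy ^ 2"
  with eq have "Q * (logx - logy) = (bvY * (logx + logy) - ?\<Phi>) * (logx - logy)"
    by simp
  then show "Q = bvY * (logx + logy) - ?\<Phi>"
    using logx_minus_logy_nonzero by simp
qed

lemma poly_gregory_kernel_nth: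
  "poly (gregory_kernel $ n) t = 2 * (-1) ^ n / fact n * stirling1_poly n 2 (t - 1)"
proof -
  have kernel: "gregory_kernel = fps_const [:2:] * (stirling_series 2 :: real poly fps)"
    by (simp add: gregory_kernel_def stirling_series_eq mult_ac flip: fps_const_mult)
  show ?thesis
    unfolding kernel by (simp add: stirling_series_def poly_stirling1_shifted)
qed

theorem theorem5p3:
  fixes m n :: nat
  assumes "m \<ge> 1" and "n \<ge> 2"
  shows "gen_gregory m n =
    2 * (-1) ^ (n - 1) / fact n *
      integral {0..1} (\<lambda>t::real. (t gchoose m) * stirling1_poly n 2 (t - 1))"
proof -
  have integrand: "poly (binomial_series [:0, 1:] $ m * gregory_kernel $ n)
      = (\<lambda>t. 2 * (-1) ^ n / fact n * ((t gchoose m) * stirling1_poly n 2 (t - 1)))"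
    by (rule ext) (simp add: poly_binomial_series_nth poly_gregory_kernel_nth)
  have "(bvY * (logx + logy)) $ n $ m = 0"
    using assms by (simp add: bvY_def logx_def logy_def)
  then have "gen_gregory m n = - integral01 (binomial_series [:0, 1:] $ m * gregory_kernel $ n)"
    by (simp add: gen_gregory_def gregory_gf_eq)
  also have "\<dots> = - (2 * (-1) ^ n / fact n)
      * integral {0..1} (\<lambda>t. (t gchoose m) * stirling1_poly n 2 (t - 1))"
    by (simp add: integral01_def integrand)
  also have "- (2 * (-1) ^ n / fact n) = (2 * (-1) ^ (n - 1) / fact n :: real)"
    using assms by (cases n) auto
  finally show ?thesis .
qed

end
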